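(* Let $f$ be an infinitely differentiable real-valued function on $\mathbb{R}^2$ supported in a compact set contained in the open half-plane $\{(x,y):y>0\}$. Then there exist real polynomials (1) $A_{2k,2i}(t)=\sum_{j=1}^{k+i}A_j(2k,2i)\,t^{2j-1}$ on $[0,1]$, for integers $k\ge1$ and $0\le i\le k$, and (2) $B_{2k-1,2i-1}(t)=\sum_{j=1}^{k+i-1}B_j(2k-1,2i-1)\,t^{2j-1}$ on $[0,1]$, for integers $k\ge1$ and $1\le i\le k$, such that for all $p\in\mathbb{R}$, $r>0$ and $k\ge1$, $$a_{2k}(p,r)=2\,Mf(p,r)+\int_0^r\sum_{i=0}^{k} r^{2i-1}A_{2k,2i}(u/r)\,\frac{\partial^{2i}}{\partial p^{2i}}Mf(p,u)\,du$$ and $$b_{2k-1}(p,r)=\int_0^r\sum_{i=1}^{k} r^{2(i-1)}B_{2k-1,2i-1}(u/r)\,\frac{\partial^{2i-1}}{\partial p^{2i-1}}Mf(p,u)\,du.$$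
   Context: Use Cartesian coordinates on $\mathbb{R}^2$ in which the line $L$ is the $x$-axis. For $p\in\mathbb{R}$, $r\ge0$ and $\varphi\in[-\pi,\pi]$ write $f(p,r,\varphi)=f(p+r\sin\varphi,\,r\cos\varphi)$ for the restriction of $f$ to the circle of radius $r$ centered at $(p,0)$, with $\varphi$ the angular coordinate measured from the direction perpendicular to $L$. Define $Mf(p,r)=\frac{1}{2\pi}\int_{-\pi}^{\pi}f(p,r,\varphi)\,d\varphi$ and the Fourier coefficients $a_k(p,r)=\frac1\pi\int_{-\pi}^{\pi}f(p,r,\varphi)\cos(k\varphi)\,d\varphi$, $b_k(p,r)=\frac1\pi\int_{-\pi}^{\pi}f(p,r,\varphi)\sin(k\varphi)\,d\varphi$ for $k\ge1$. For $i=0$ the $0$-th derivative is $Mf$ itself. *)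

theory Defs
  imports "HOL-Analysis.Analysis"
begin

definition pdx :: "(real \<times> real \<Rightarrow> real) \<Rightarrow> real \<times> real \<Rightarrow> real" where
  "pdx g = (\<lambda>(x, y). deriv (\<lambda>s. g (s, y)) x)"

definition pdy :: "(real \<times> real \<Rightarrow> real) \<Rightarrow> real \<times> real \<Rightarrow> real" where
  "pdy g = (\<lambda>(x, y). deriv (\<lambda>t. g (x, t)) y)"

fun iter_pd :: "bool list \<Rightarrow> (real \<times> real \<Rightarrow> real) \<Rightarrow> real \<times> real \<Rightarrow> real" where
  "iter_pd [] g = g"
| "iter_pd (b # ws) g = (if b then pdx else pdy) (iter_pd ws g)"

definition smooth2 :: "(real \<times> real \<Rightarrow> real) \<Rightarrow> bool" where
  "smooth2 f \<longleftrightarrow> (\<forall>ws. continuous_on UNIV (iter_pd ws f) \<and>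
      (\<forall>x y. (\<lambda>s. iter_pd ws f (s, y)) differentiable (at x)) \<and>
      (\<forall>x y. (\<lambda>t. iter_pd ws f (x, t)) differentiable (at y)))"

definition circ :: "(real \<times> real \<Rightarrow> real) \<Rightarrow> real \<Rightarrow> real \<Rightarrow> real \<Rightarrow> real" where
  "circ f p r \<phi> = f (p + r * sin \<phi>, r * cos \<phi>)"

definition Mf :: "(real \<times> real \<Rightarrow> real) \<Rightarrow> real \<Rightarrow> real \<Rightarrow> real" where
  "Mf f p r = (1 / (2 * pi)) * integral {-pi..pi} (\<lambda>\<phi>. circ f p r \<phi>)"

definition a_coef :: "(real \<times> real \<Rightarrow> real) \<Rightarrow> nat \<Rightarrow> real \<Rightarrow> real \<Rightarrow> real" where
  "a_coef f k p r = (1 / pi) * integral {-pi..pi} (\<lambda>\<phi>. circ f p r \<phi> * cos (real k * \<phi>))"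

definition b_coef :: "(real \<times> real \<Rightarrow> real) \<Rightarrow> nat \<Rightarrow> real \<Rightarrow> real \<Rightarrow> real" where
  "b_coef f k p r = (1 / pi) * integral {-pi..pi} (\<lambda>\<phi>. circ f p r \<phi> * sin (real k * \<phi>))"

end

(*
  Write F_n(p, r) for the integral of f (p + r sin \<phi>, r cos \<phi>) (sin \<phi>)^n over [-\<pi>, \<pi>].
  Since cos (2k\<phi>) and sin ((2k+1)\<phi>) / sin \<phi> are polynomials in (sin \<phi>)^2, the coefficients
  a_2k and b_(2k-1) are combinations of the even resp. odd moments F_n, and F_0 = 2\<pi> Mf.
  Writing d/dx in polar coordinates about (p, 0) and integrating by parts in \<phi> gives the
  radial equation
    d/dr (r^(n+1) F_(n+1)) = r^(n+1) F_n[d/dx f] + n r^n F_(n-1),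
  while d/dp F_n = F_n[d/dx f]. Integrating it and inducting on n expresses every weighted integral
  of u^a F_m(u) over [0, r], hence r^n F_n(r), as an integral of the derivatives (d/dp)^i Mf(p, u)
  against kernels that are odd homogeneous polynomials in (r, u); dividing by r^n gives the
  polynomials in u/r of the theorem.
*)
theory Submission
  imports Defs
begin

section \<open>Smooth functions on the plane\<close>

lemma iter_pd_append: "iter_pd ws (iter_pd vs g) = iter_pd (ws @ vs) g"
  by (induction ws) auto

lemma smooth2_pdx: "smooth2 g \<Longrightarrow> smooth2 (pdx g)"
  unfolding smooth2_def iter_pd_append[of _ "[True]", simplified] by blast

lemma smooth2_pdy: "smooth2 g \<Longrightarrow> smooth2 (pdy g)"
  unfolding smooth2_def iter_pd_append[of _ "[False]", simplified] by blast

lemma smooth2_funpow_pdx: "smooth2 g \<Longrightarrow> smooth2 ((pdx ^^ i) g)"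
  by (induction i) (auto intro: smooth2_pdx)

lemma smooth2_continuous_on: "smooth2 g \<Longrightarrow> continuous_on UNIV g"
  unfolding smooth2_def by (metis iter_pd.simps(1))

lemma smooth2_has_real_derivative_x:
  "smooth2 g \<Longrightarrow> ((\<lambda>s. g (s, y)) has_real_derivative pdx g (x, y)) (at x)"
  unfolding smooth2_def pdx_def
  by (metis DERIV_deriv_iff_real_differentiable case_prod_conv iter_pd.simps(1))

lemma smooth2_has_real_derivative_y:
  "smooth2 g \<Longrightarrow> ((\<lambda>t. g (x, t)) has_real_derivative pdy g (x, y)) (at y)"
  unfolding smooth2_def pdy_def
  by (metis DERIV_deriv_iff_real_differentiable case_prod_conv iter_pd.simps(1))

text \<open>Continuity of the partial derivative in y makes the two partial derivatives a total one.\<close>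
lemma smooth2_has_derivative:
  assumes "smooth2 g"
  shows "(g has_derivative (\<lambda>(h, k). pdx g z * h + pdy g z * k)) (at z)"
proof -
  obtain x y where z: "z = (x, y)" by fastforce
  have dx: "((\<lambda>x. g (x, y)) has_derivative (\<lambda>h. pdx g (x, y) * h)) (at x within UNIV)"
    using smooth2_has_real_derivative_x[OF assms] by (simp add: has_field_derivative_def)
  have dy: "((\<lambda>y. g (x, y)) has_derivative blinfun_apply (blinfun_mult_right (pdy g (x, y))))
      (at y within UNIV)" for x y
    using smooth2_has_real_derivative_y[OF assms] by (simp add: has_field_derivative_def mult.commute)
  have "continuous_on UNIV (\<lambda>z. blinfun_mult_right (pdy g z))"
    using bounded_linear.continuous_on[OF bounded_linear_blinfun_mult_right
        smooth2_continuous_on[OF smooth2_pdy[OF assms]]] .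
  then have "continuous (at (x, y) within UNIV \<times> UNIV) (\<lambda>(x, y). blinfun_mult_right (pdy g (x, y)))"
    by (simp add: case_prod_beta' continuous_on_eq_continuous_within)
  from has_derivative_partialsI[OF dx dy this UNIV_I convex_UNIV]
  show ?thesis
    unfolding z blinfun_mult_right.rep_eq UNIV_Times_UNIV by (simp add: case_prod_beta')
qed

lemma smooth2_has_real_derivative_comp:
  assumes g: "smooth2 g"
    and a: "(\<alpha> has_real_derivative a) (at x)" and b: "(\<beta> has_real_derivative b) (at x)"
  shows "((\<lambda>x. g (\<alpha> x, \<beta> x)) has_real_derivative
           (pdx g (\<alpha> x, \<beta> x) * a + pdy g (\<alpha> x, \<beta> x) * b)) (at x)"
proof -
  have "((\<lambda>x. (\<alpha> x, \<beta> x)) has_derivative (\<lambda>h. (h * a, h * b))) (at x)"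
    using has_derivative_Pair[OF a[unfolded has_field_derivative_def] b[unfolded has_field_derivative_def]]
    by (simp add: mult.commute)
  from diff_chain_at[OF this smooth2_has_derivative[OF g]]
  have "((\<lambda>x. g (\<alpha> x, \<beta> x)) has_derivative
      (\<lambda>h. pdx g (\<alpha> x, \<beta> x) * (h * a) + pdy g (\<alpha> x, \<beta> x) * (h * b))) (at x)"
    by (simp add: o_def)
  then show ?thesis
    unfolding has_field_derivative_def by (rule has_derivative_eq_rhs) (auto simp: algebra_simps)
qed

lemma continuous_on_compose_pair:
  assumes "continuous_on UNIV h" "continuous_on S \<alpha>" "continuous_on S \<beta>"
  shows "continuous_on S (\<lambda>z. h (\<alpha> z, \<beta> z))"
  using continuous_on_compose[OF continuous_on_Pair[OF assms(2,3)]
      continuous_on_subset[OF assms(1)]] by (simp add: o_def)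

lemma continuous_on_circle:
  fixes S :: "real set"
  assumes "continuous_on UNIV h"
  shows "continuous_on S (\<lambda>\<phi>. h (p + r * sin \<phi>, r * cos \<phi>))"
  by (rule continuous_on_compose_pair[OF assms]) (auto intro!: continuous_intros)

lemma integrable_circle:
  fixes w :: "real \<Rightarrow> real"
  assumes "continuous_on UNIV h" "continuous_on {-pi..pi} w"
  shows "(\<lambda>\<phi>. h (p + r * sin \<phi>, r * cos \<phi>) * w \<phi>) integrable_on {-pi..pi}"
  by (intro integrable_continuous_interval continuous_intros continuous_on_circle assms)

section \<open>Sine moments on circles centred on the line\<close>

definition sin_moment :: "(real \<times> real \<Rightarrow> real) \<Rightarrow> nat \<Rightarrow> real \<Rightarrow> real \<Rightarrow> real" where
  "sin_moment g n p r = integral {-pi..pi} (\<lambda>\<phi>. g (p + r * sin \<phi>, r * cos \<phi>) * sin \<phi> ^ n)"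

text \<open>The same moment of the radial derivative of g on the circle.\<close>
definition sin_moment_dr :: "(real \<times> real \<Rightarrow> real) \<Rightarrow> nat \<Rightarrow> real \<Rightarrow> real \<Rightarrow> real" where
  "sin_moment_dr g n p r = integral {-pi..pi} (\<lambda>\<phi>.
     (pdx g (p + r * sin \<phi>, r * cos \<phi>) * sin \<phi> + pdy g (p + r * sin \<phi>, r * cos \<phi>) * cos \<phi>) * sin \<phi> ^ n)"

lemma Mf_eq_sin_moment: "Mf g p r = sin_moment g 0 p r / (2 * pi)"
  unfolding Mf_def circ_def sin_moment_def by simp

lemma sin_moment_has_real_derivative_p:
  assumes g: "smooth2 g"
  shows "((\<lambda>p. sin_moment g n p r) has_real_derivative sin_moment (pdx g) n p r) (at p)"
proof -
  have "((\<lambda>x. integral (cbox (-pi) pi) (\<lambda>t. g (x + r * sin t, r * cos t) * sin t ^ n))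
      has_real_derivative integral (cbox (-pi) pi) (\<lambda>t. pdx g (p + r * sin t, r * cos t) * sin t ^ n))
      (at p within UNIV)"
  proof (rule leibniz_rule_field_derivative)
    fix x t
    have "((\<lambda>x. g (x + r * sin t, r * cos t)) has_real_derivative pdx g (x + r * sin t, r * cos t)) (at x)"
      using DERIV_shift[THEN iffD1, OF smooth2_has_real_derivative_x[OF g]] by simp
    then show "((\<lambda>x. g (x + r * sin t, r * cos t) * sin t ^ n) has_real_derivative
        pdx g (x + r * sin t, r * cos t) * sin t ^ n) (at x within UNIV)"
      by (auto intro!: derivative_eq_intros)
  next
    show "continuous_on (UNIV \<times> cbox (- pi) pi) (\<lambda>(x, t). pdx g (x + r * sin t, r * cos t) * sin t ^ n)"
      unfolding case_prod_unfold
      by (auto intro!: continuous_intros continuous_on_compose_pair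
          smooth2_continuous_on[OF smooth2_pdx[OF g]])
  qed (auto simp: cbox_interval intro!: integrable_circle continuous_intros smooth2_continuous_on[OF g])
  then show ?thesis unfolding sin_moment_def by (simp add: cbox_interval)
qed

lemma sin_moment_has_real_derivative_r:
  assumes g: "smooth2 g"
  shows "((\<lambda>r. sin_moment g n p r) has_real_derivative sin_moment_dr g n p r) (at r)"
proof -
  have "((\<lambda>x. integral (cbox (-pi) pi) (\<lambda>t. g (p + x * sin t, x * cos t) * sin t ^ n))
      has_real_derivative integral (cbox (-pi) pi) (\<lambda>t. (pdx g (p + r * sin t, r * cos t) * sin t
        + pdy g (p + r * sin t, r * cos t) * cos t) * sin t ^ n)) (at r within UNIV)"
  proof (rule leibniz_rule_field_derivative)
    fix x t
    have "((\<lambda>x. g (p + x * sin t, x * cos t)) has_real_derivative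
        (pdx g (p + x * sin t, x * cos t) * sin t + pdy g (p + x * sin t, x * cos t) * cos t)) (at x)"
      by (rule smooth2_has_real_derivative_comp[OF g]) (auto intro!: derivative_eq_intros)
    then show "((\<lambda>x. g (p + x * sin t, x * cos t) * sin t ^ n) has_real_derivative
        (pdx g (p + x * sin t, x * cos t) * sin t + pdy g (p + x * sin t, x * cos t) * cos t) * sin t ^ n)
        (at x within UNIV)"
      by (auto intro!: derivative_eq_intros)
  next
    show "continuous_on (UNIV \<times> cbox (- pi) pi) (\<lambda>(x, t). (pdx g (p + x * sin t, x * cos t) * sin t
        + pdy g (p + x * sin t, x * cos t) * cos t) * sin t ^ n)"
      unfolding case_prod_unfold
      by (auto intro!: continuous_intros continuous_on_compose_pair
          smooth2_continuous_on[OF smooth2_pdx[OF g]] smooth2_continuous_on[OF smooth2_pdy[OF g]])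
  qed (auto simp: cbox_interval intro!: integrable_circle continuous_intros smooth2_continuous_on[OF g])
  then show ?thesis unfolding sin_moment_def sin_moment_dr_def by (simp add: cbox_interval)
qed

lemma continuous_on_sin_moment: "smooth2 g \<Longrightarrow> continuous_on S (\<lambda>r. sin_moment g n p r)"
  by (rule continuous_at_imp_continuous_on)
    (auto intro: DERIV_isCont sin_moment_has_real_derivative_r)

lemma continuous_on_Mf: "smooth2 g \<Longrightarrow> continuous_on S (\<lambda>r. Mf g p r)"
  unfolding Mf_eq_sin_moment by (auto intro!: continuous_intros continuous_on_sin_moment)

lemma sin_moment_by_parts:
  assumes g: "smooth2 g"
  shows "integral {-pi..pi} (\<lambda>\<phi>. (pdx g (p + r * sin \<phi>, r * cos \<phi>) * (r * cos \<phi>)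
            + pdy g (p + r * sin \<phi>, r * cos \<phi>) * (- (r * sin \<phi>))) * (cos \<phi> * sin \<phi> ^ n))
       = integral {-pi..pi} (\<lambda>\<phi>. g (p + r * sin \<phi>, r * cos \<phi>) *
            (sin \<phi> ^ Suc n - real n * (cos \<phi>)\<^sup>2 * sin \<phi> ^ (n - 1)))"
proof -
  define \<Phi> where "\<Phi> \<phi> = g (p + r * sin \<phi>, r * cos \<phi>)" for \<phi>
  define D where "D \<phi> = pdx g (p + r * sin \<phi>, r * cos \<phi>) * (r * cos \<phi>)
            + pdy g (p + r * sin \<phi>, r * cos \<phi>) * (- (r * sin \<phi>))" for \<phi>
  define w where "w \<phi> = cos \<phi> * sin \<phi> ^ n" for \<phi> :: real
  define w' where "w' \<phi> = - sin \<phi> * sin \<phi> ^ n + cos \<phi> * (real n * sin \<phi> ^ (n - 1) * cos \<phi>)"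
    for \<phi> :: real
  have "((\<lambda>\<phi>. D \<phi> * w \<phi> + \<Phi> \<phi> * w' \<phi>) has_integral (\<Phi> pi * w pi - \<Phi> (-pi) * w (-pi))) {-pi..pi}"
  proof (rule fundamental_theorem_of_calculus)
    fix x
    have "(\<Phi> has_real_derivative D x) (at x)"
      unfolding \<Phi>_def D_def
      by (rule smooth2_has_real_derivative_comp[OF g]) (auto intro!: derivative_eq_intros)
    moreover have "(w has_real_derivative w' x) (at x)"
      unfolding w_def w'_def by (auto intro!: derivative_eq_intros)
    ultimately have "((\<lambda>\<phi>. \<Phi> \<phi> * w \<phi>) has_real_derivative D x * w x + \<Phi> x * w' x) (at x)"
      by (auto intro!: derivative_eq_intros)
    then show "((\<lambda>\<phi>. \<Phi> \<phi> * w \<phi>) has_vector_derivative D x * w x + \<Phi> x * w' x) (at x within {-pi..pi})"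
      by (simp add: has_real_derivative_iff_has_vector_derivative[symmetric] has_field_derivative_at_within)
  qed simp
  moreover have "\<Phi> pi * w pi - \<Phi> (-pi) * w (-pi) = 0"
    unfolding \<Phi>_def w_def by simp
  ultimately have "integral {-pi..pi} (\<lambda>\<phi>. D \<phi> * w \<phi> + \<Phi> \<phi> * w' \<phi>) = 0"
    by (simp add: integral_unique)
  moreover have "(\<lambda>\<phi>. D \<phi> * w \<phi>) integrable_on {-pi..pi}" "(\<lambda>\<phi>. \<Phi> \<phi> * w' \<phi>) integrable_on {-pi..pi}"
    unfolding D_def w_def \<Phi>_def w'_def
    by (auto intro!: integrable_continuous_interval continuous_intros continuous_on_circle
        smooth2_continuous_on g smooth2_pdx smooth2_pdy)
  ultimately have "integral {-pi..pi} (\<lambda>\<phi>. D \<phi> * w \<phi>) = integral {-pi..pi} (\<lambda>\<phi>. - (\<Phi> \<phi> * w' \<phi>))"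
    by (simp add: integral_add integral_neg eq_neg_iff_add_eq_0)
  also have "(\<lambda>\<phi>. - (\<Phi> \<phi> * w' \<phi>))
      = (\<lambda>\<phi>. \<Phi> \<phi> * (sin \<phi> ^ Suc n - real n * (cos \<phi>)\<^sup>2 * sin \<phi> ^ (n - 1)))"
    unfolding w'_def by (rule ext) (simp add: algebra_simps power2_eq_square)
  finally show ?thesis unfolding \<Phi>_def D_def w_def .
qed

lemma cos_squared_times_sin_power:
  "real n * (cos \<phi>)\<^sup>2 * sin \<phi> ^ (n - 1) = real n * sin \<phi> ^ (n - 1) - real n * sin \<phi> ^ Suc n"
proof (cases n)
  case (Suc m)
  have cos2: "(cos \<phi>)\<^sup>2 = 1 - (sin \<phi>)\<^sup>2" by (simp add: cos_squared_eq)
  show ?thesis unfolding cos2 Suc by (simp add: algebra_simps power2_eq_square)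
qed simp

text \<open>
  In polar coordinates about (p,0), d/dx = sin \<phi> d/dr + (cos \<phi> / r) d/d\<phi>;
  the angular part is integrated by parts.\<close>
lemma sin_moment_pdx_recurrence:
  assumes g: "smooth2 g"
  shows "r * sin_moment (pdx g) n p r
    = r * sin_moment_dr g (Suc n) p r + real (Suc n) * sin_moment g (Suc n) p r
      - real n * sin_moment g (n - 1) p r"
proof -
  define X where "X \<phi> = pdx g (p + r * sin \<phi>, r * cos \<phi>)" for \<phi>
  define Y where "Y \<phi> = pdy g (p + r * sin \<phi>, r * cos \<phi>)" for \<phi>
  define \<Phi> where "\<Phi> \<phi> = g (p + r * sin \<phi>, r * cos \<phi>)" for \<phi>
  define A where "A \<phi> = (X \<phi> * sin \<phi> + Y \<phi> * cos \<phi>) * sin \<phi> ^ Suc n" for \<phi>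
  define B where "B \<phi> = (X \<phi> * (r * cos \<phi>) + Y \<phi> * (- (r * sin \<phi>))) * (cos \<phi> * sin \<phi> ^ n)" for \<phi>
  have split: "r * (X \<phi> * sin \<phi> ^ n) = r * A \<phi> + B \<phi>" for \<phi>
  proof -
    have "r * A \<phi> + B \<phi> = r * (X \<phi> * sin \<phi> ^ n) * ((sin \<phi>)\<^sup>2 + (cos \<phi>)\<^sup>2)"
      unfolding A_def B_def power2_eq_square power_Suc by algebra
    then show ?thesis by simp
  qed
  have cont: "continuous_on UNIV g" "continuous_on UNIV (pdx g)" "continuous_on UNIV (pdy g)"
    using g by (auto intro: smooth2_continuous_on smooth2_pdx smooth2_pdy)
  have int: "A integrable_on {-pi..pi}" "B integrable_on {-pi..pi}"
    "(\<lambda>\<phi>. \<Phi> \<phi> * sin \<phi> ^ Suc n * real (Suc n)) integrable_on {-pi..pi}"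
    "(\<lambda>\<phi>. \<Phi> \<phi> * sin \<phi> ^ (n - 1) * real n) integrable_on {-pi..pi}"
    unfolding A_def B_def X_def Y_def \<Phi>_def
    by (auto intro!: integrable_continuous_interval continuous_intros continuous_on_circle cont)
  have "r * sin_moment (pdx g) n p r = integral {-pi..pi} (\<lambda>\<phi>. r * A \<phi> + B \<phi>)"
    unfolding sin_moment_def X_def[symmetric] split[symmetric] by simp
  also have "\<dots> = r * integral {-pi..pi} A + integral {-pi..pi} B"
    using integral_add[OF integrable_on_cmult_left[OF int(1)] int(2)] by simp
  also have "integral {-pi..pi} A = sin_moment_dr g (Suc n) p r"
    unfolding A_def sin_moment_dr_def X_def Y_def ..
  also have "integral {-pi..pi} B = integral {-pi..pi} (\<lambda>\<phi>. \<Phi> \<phi> *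
      (sin \<phi> ^ Suc n - real n * (cos \<phi>)\<^sup>2 * sin \<phi> ^ (n - 1)))"
    unfolding B_def X_def Y_def \<Phi>_def by (rule sin_moment_by_parts[OF g])
  also have "\<dots> = integral {-pi..pi}
      (\<lambda>\<phi>. \<Phi> \<phi> * sin \<phi> ^ Suc n * real (Suc n) - \<Phi> \<phi> * sin \<phi> ^ (n - 1) * real n)"
    by (simp only: cos_squared_times_sin_power) (simp add: algebra_simps)
  also have "\<dots> = real (Suc n) * sin_moment g (Suc n) p r - real n * sin_moment g (n - 1) p r"
    using integral_diff[OF int(3,4)] unfolding sin_moment_def \<Phi>_def by simp
  finally show ?thesis by simp
qed

lemma pow_sin_moment_has_real_derivative:
  assumes g: "smooth2 g"
  shows "((\<lambda>r. r ^ Suc n * sin_moment g (Suc n) p r) has_real_derivative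
           r ^ Suc n * sin_moment (pdx g) n p r + real n * (r ^ n * sin_moment g (n - 1) p r)) (at r)"
proof -
  have "((\<lambda>r. r ^ Suc n * sin_moment g (Suc n) p r) has_real_derivative
      real (Suc n) * r ^ n * sin_moment g (Suc n) p r + sin_moment_dr g (Suc n) p r * r ^ Suc n) (at r)"
    using DERIV_mult[OF DERIV_pow[of "Suc n" r UNIV] sin_moment_has_real_derivative_r[OF g]] by simp
  also have "real (Suc n) * r ^ n * sin_moment g (Suc n) p r + sin_moment_dr g (Suc n) p r * r ^ Suc n
      = r ^ n * (r * sin_moment_dr g (Suc n) p r + real (Suc n) * sin_moment g (Suc n) p r)"
    by (simp add: algebra_simps)
  also have "\<dots> = r ^ n * (r * sin_moment (pdx g) n p r + real n * sin_moment g (n - 1) p r)"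
    using sin_moment_pdx_recurrence[OF g, of r n p] by simp
  also have "\<dots> = r ^ Suc n * sin_moment (pdx g) n p r + real n * (r ^ n * sin_moment g (n - 1) p r)"
    by (simp add: algebra_simps)
  finally show ?thesis .
qed

lemma pow_sin_moment_eq_integral:
  assumes g: "smooth2 g" and r: "0 \<le> r"
  shows "r ^ Suc n * sin_moment g (Suc n) p r
    = integral {0..r} (\<lambda>u. u ^ Suc n * sin_moment (pdx g) n p u + real n * (u ^ n * sin_moment g (n - 1) p u))"
proof -
  have "((\<lambda>u. u ^ Suc n * sin_moment (pdx g) n p u + real n * (u ^ n * sin_moment g (n - 1) p u))
      has_integral (r ^ Suc n * sin_moment g (Suc n) p r - 0 ^ Suc n * sin_moment g (Suc n) p 0)) {0..r}"
    using pow_sin_moment_has_real_derivative[OF g]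
    by (intro fundamental_theorem_of_calculus[OF r])
      (simp add: has_real_derivative_iff_has_vector_derivative[symmetric] has_field_derivative_at_within)
  then show ?thesis by (simp add: integral_unique)
qed

lemma integral_power_times_primitive:
  fixes H :: "real \<Rightarrow> real"
  assumes H: "continuous_on {0..r} H" and r: "0 \<le> r" and e: "1 \<le> e"
  shows "integral {0..r} (\<lambda>u. u ^ (e - 1) * integral {0..u} H)
       = r ^ e / real e * integral {0..r} H - 1 / real e * integral {0..r} (\<lambda>v. v ^ e * H v)"
proof -
  define R where "R x = x ^ e / real e * integral {0..x} H - 1 / real e * integral {0..x} (\<lambda>v. v ^ e * H v)"
    for x
  have "((\<lambda>u. u ^ (e - 1) * integral {0..u} H) has_integral (R r - R 0)) {0..r}"
  proof (rule fundamental_theorem_of_calculus[OF r])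
    fix x assume x: "x \<in> {0..r}"
    have "(R has_real_derivative
        real e * x ^ (e - 1) / real e * integral {0..x} H + H x * (x ^ e / real e)
         - 1 / real e * (x ^ e * H x)) (at x within {0..r})"
      unfolding R_def
      by (intro DERIV_diff DERIV_mult DERIV_cmult integral_has_real_derivative[OF H x]
          integral_has_real_derivative[OF _ x] continuous_intros H)
        (use DERIV_pow[of e x "{0..r}"] in \<open>auto intro!: derivative_eq_intros\<close>)
    also have "real e * x ^ (e - 1) / real e * integral {0..x} H + H x * (x ^ e / real e)
         - 1 / real e * (x ^ e * H x) = x ^ (e - 1) * integral {0..x} H"
      using e by (simp add: field_simps)
    finally show "(R has_vector_derivative x ^ (e - 1) * integral {0..x} H) (at x within {0..r})"
      unfolding has_real_derivative_iff_has_vector_derivative .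
  qed
  moreover have "R 0 = 0" unfolding R_def using e by simp
  ultimately show ?thesis unfolding R_def by (simp add: integral_unique)
qed

section \<open>Integral representations by homogeneous kernels\<close>

definition odd_hom_poly :: "nat \<Rightarrow> (real \<Rightarrow> real \<Rightarrow> real) \<Rightarrow> bool" where
  "odd_hom_poly D Q \<longleftrightarrow> (\<exists>c. (\<forall>j. D < Suc (2 * j) \<longrightarrow> c j = 0) \<and>
      (\<forall>r u. Q r u = (\<Sum>j<D. c j * r ^ (D - Suc (2 * j)) * u ^ Suc (2 * j))))"

lemma sum_lessThan_eq_zero_tail:
  fixes A B L :: nat
  assumes "\<And>j. L \<le> j \<Longrightarrow> f j = 0" "L \<le> A" "L \<le> B"
  shows "sum f {..<A} = (sum f {..<B} :: 'a::comm_monoid_add)"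
proof -
  have "sum f {..<A} = sum f {..<L}" if "L \<le> A" for A
  proof -
    have "sum f {..<A} = sum f ({..<L} \<union> {L..<A})"
      using that by (metis ivl_disj_un_one(2))
    also have "\<dots> = sum f {..<L} + sum f {L..<A}"
      by (rule sum.union_disjoint) auto
    also have "sum f {L..<A} = 0" using assms(1) by (auto intro: sum.neutral)
    finally show ?thesis by simp
  qed
  then show ?thesis using assms(2,3) by metis
qed

lemma odd_hom_poly_zero: "odd_hom_poly D (\<lambda>r u. 0)"
  unfolding odd_hom_poly_def by (rule exI[of _ "\<lambda>j. 0"]) simp

lemma odd_hom_poly_power: "odd d \<Longrightarrow> odd_hom_poly d (\<lambda>r u. u ^ d)"
proof -
  assume "odd d"
  then obtain k where k: "d = Suc (2 * k)" by (metis oddE Suc_eq_plus1)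
  have "(\<Sum>j<d. (if j = k then 1 else 0) * r ^ (d - Suc (2 * j)) * u ^ Suc (2 * j))
      = (\<Sum>j<d. if j = k then u ^ d else 0)" for r u :: real
    by (rule sum.cong) (auto simp: k)
  moreover have "k < d" using k by simp
  ultimately have "(\<Sum>j<d. (if j = k then 1 else 0) * r ^ (d - Suc (2 * j)) * u ^ Suc (2 * j)) = u ^ d"
    for r u :: real by simp
  then show ?thesis unfolding odd_hom_poly_def
    by (intro exI[of _ "\<lambda>j. if j = k then 1 else 0"]) (auto simp: k)
qed

lemma odd_hom_poly_lincomb:
  assumes "odd_hom_poly D P" "odd_hom_poly D Q"
  shows "odd_hom_poly D (\<lambda>r u. a * P r u + b * Q r u)"
proof -
  obtain c where c: "\<forall>j. D < Suc (2 * j) \<longrightarrow> c j = 0"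
    "\<forall>r u. P r u = (\<Sum>j<D. c j * r ^ (D - Suc (2 * j)) * u ^ Suc (2 * j))"
    using assms(1) unfolding odd_hom_poly_def by blast
  obtain d where d: "\<forall>j. D < Suc (2 * j) \<longrightarrow> d j = 0"
    "\<forall>r u. Q r u = (\<Sum>j<D. d j * r ^ (D - Suc (2 * j)) * u ^ Suc (2 * j))"
    using assms(2) unfolding odd_hom_poly_def by blast
  show ?thesis unfolding odd_hom_poly_def
    by (rule exI[of _ "\<lambda>j. a * c j + b * d j"])
      (simp add: c d sum.distrib sum_distrib_left algebra_simps)
qed

lemma odd_hom_poly_mult_power:
  assumes "odd_hom_poly D P"
  shows "odd_hom_poly (D + e) (\<lambda>r u. r ^ e * P r u)"
proof -
  obtain c where c: "\<And>j. D < Suc (2 * j) \<Longrightarrow> c j = 0"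
    "\<And>r u. P r u = (\<Sum>j<D. c j * r ^ (D - Suc (2 * j)) * u ^ Suc (2 * j))"
    using assms unfolding odd_hom_poly_def by blast
  have "r ^ e * P r u = (\<Sum>j<D. c j * r ^ (D + e - Suc (2 * j)) * u ^ Suc (2 * j))" for r u
    unfolding c(2) sum_distrib_left
  proof (rule sum.cong[OF refl])
    fix j
    show "r ^ e * (c j * r ^ (D - Suc (2 * j)) * u ^ Suc (2 * j))
        = c j * r ^ (D + e - Suc (2 * j)) * u ^ Suc (2 * j)"
    proof (cases "D < Suc (2 * j)")
      case False
      then have "D + e - Suc (2 * j) = e + (D - Suc (2 * j))" by simp
      then show ?thesis by (simp add: power_add)
    qed (simp add: c(1))
  qed
  also have "\<dots> r u = (\<Sum>j<D + e. c j * r ^ (D + e - Suc (2 * j)) * u ^ Suc (2 * j))" for r u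
    by (rule sum_lessThan_eq_zero_tail[where L=D]) (use c(1) in auto)
  finally show ?thesis
    unfolding odd_hom_poly_def using c(1) by (intro exI[of _ c]) auto
qed

lemma odd_hom_poly_scaled:
  fixes c :: "nat \<Rightarrow> real" and r u :: real
  assumes "\<forall>j. D < Suc (2 * j) \<longrightarrow> c j = 0" "r \<noteq> 0"
  shows "(\<Sum>j<D. c j * r ^ (D - Suc (2 * j)) * u ^ Suc (2 * j)) = r ^ D * (\<Sum>j<D. c j * (u / r) ^ Suc (2 * j))"
proof -
  have "(\<Sum>j<D. c j * r ^ (D - Suc (2 * j)) * u ^ Suc (2 * j)) = (\<Sum>j<D. r ^ D * (c j * (u / r) ^ Suc (2 * j)))"
  proof (rule sum.cong[OF refl])
    fix j
    show "c j * r ^ (D - Suc (2 * j)) * u ^ Suc (2 * j) = r ^ D * (c j * (u / r) ^ Suc (2 * j))"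
    proof (cases "D < Suc (2 * j)")
      case False
      then have "r ^ (D - Suc (2 * j)) = r ^ D / r ^ Suc (2 * j)"
        using assms(2) by (simp add: power_diff not_less del: power_Suc)
      then show ?thesis by (simp add: power_divide del: power_Suc)
    qed (simp add: assms(1))
  qed
  then show ?thesis by (simp add: sum_distrib_left)
qed

lemma continuous_on_odd_hom_poly: "odd_hom_poly D Q \<Longrightarrow> continuous_on S (Q r)"
  unfolding odd_hom_poly_def by (auto intro!: continuous_intros simp: fun_eq_iff[symmetric])

definition kernel_repr :: "nat \<Rightarrow> nat \<Rightarrow> (nat \<Rightarrow> real \<Rightarrow> real \<Rightarrow> real) \<Rightarrow>
    ((real \<times> real \<Rightarrow> real) \<Rightarrow> real \<Rightarrow> real \<Rightarrow> real) \<Rightarrow> bool" where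
  "kernel_repr D N Q \<Phi> \<longleftrightarrow> (\<forall>i. odd_hom_poly (D + i) (Q i)) \<and>
     (\<forall>i r u. N < i \<or> odd (N + i) \<longrightarrow> Q i r u = 0) \<and>
     (\<forall>g p r. smooth2 g \<longrightarrow> 0 \<le> r \<longrightarrow>
        \<Phi> g p r = integral {0..r} (\<lambda>u. \<Sum>i\<le>N. Q i r u * Mf ((pdx ^^ i) g) p u))"

lemma kernel_reprI:
  assumes "\<And>i. odd_hom_poly (D + i) (Q i)" "\<And>i r u. N < i \<or> odd (N + i) \<Longrightarrow> Q i r u = 0"
    "\<And>g p r. smooth2 g \<Longrightarrow> 0 \<le> r \<Longrightarrow>
       \<Phi> g p r = integral {0..r} (\<lambda>u. \<Sum>i\<le>N. Q i r u * Mf ((pdx ^^ i) g) p u)"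
  shows "kernel_repr D N Q \<Phi>"
  using assms unfolding kernel_repr_def by blast

lemma
  assumes "kernel_repr D N Q \<Phi>"
  shows kernel_repr_hom: "odd_hom_poly (D + i) (Q i)"
    and kernel_repr_vanish: "N < i \<or> odd (N + i) \<Longrightarrow> Q i r u = 0"
    and kernel_repr_eq: "smooth2 g \<Longrightarrow> 0 \<le> r \<Longrightarrow>
       \<Phi> g p r = integral {0..r} (\<lambda>u. \<Sum>i\<le>N. Q i r u * Mf ((pdx ^^ i) g) p u)"
  using assms unfolding kernel_repr_def by blast+

lemma integrable_kernel_sum:
  assumes "\<And>i. odd_hom_poly (D i) (Q i)" "smooth2 g"
  shows "(\<lambda>u. \<Sum>i\<in>I. Q i r u * Mf ((pdx ^^ i) g) p u) integrable_on {0..r}"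
  by (intro integrable_continuous_interval continuous_intros continuous_on_odd_hom_poly[OF assms(1)]
      continuous_on_Mf smooth2_funpow_pdx assms(2))

lemma kernel_repr_cong:
  assumes "kernel_repr D N Q \<Phi>" "\<And>g p r. smooth2 g \<Longrightarrow> 0 \<le> r \<Longrightarrow> \<Phi> g p r = \<Psi> g p r"
  shows "kernel_repr D N Q \<Psi>"
  using assms unfolding kernel_repr_def by simp

lemma kernel_repr_zero: "kernel_repr D N (\<lambda>i r u. 0) (\<lambda>g p r. 0)"
  by (rule kernel_reprI) (simp_all add: odd_hom_poly_zero)

lemma kernel_repr_lincomb:
  assumes P: "kernel_repr D N P \<Phi>" and Q: "kernel_repr D N Q \<Psi>"
  shows "kernel_repr D N (\<lambda>i r u. a * P i r u + b * Q i r u) (\<lambda>g p r. a * \<Phi> g p r + b * \<Psi> g p r)"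
proof (rule kernel_reprI)
  show "odd_hom_poly (D + i) (\<lambda>r u. a * P i r u + b * Q i r u)" for i
    by (intro odd_hom_poly_lincomb kernel_repr_hom[OF P] kernel_repr_hom[OF Q])
  show "a * P i r u + b * Q i r u = 0" if "N < i \<or> odd (N + i)" for i r u
    using kernel_repr_vanish[OF P that] kernel_repr_vanish[OF Q that] by simp
next
  fix g and p r :: real assume g: "smooth2 g" and r: "0 \<le> r"
  note int = integrable_kernel_sum[OF kernel_repr_hom[OF P] g] integrable_kernel_sum[OF kernel_repr_hom[OF Q] g]
  have "a * \<Phi> g p r + b * \<Psi> g p r
      = integral {0..r} (\<lambda>u. a * (\<Sum>i\<le>N. P i r u * Mf ((pdx ^^ i) g) p u)
          + b * (\<Sum>i\<le>N. Q i r u * Mf ((pdx ^^ i) g) p u))"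
    unfolding kernel_repr_eq[OF P g r] kernel_repr_eq[OF Q g r] integral_mult[OF int(1)] integral_mult[OF int(2)]
    by (intro integral_add[symmetric] integrable_on_mult_right int)
  then show "a * \<Phi> g p r + b * \<Psi> g p r
      = integral {0..r} (\<lambda>u. \<Sum>i\<le>N. (a * P i r u + b * Q i r u) * Mf ((pdx ^^ i) g) p u)"
    by (simp add: sum.distrib sum_distrib_left distrib_right mult.assoc)
qed

lemma kernel_repr_mult_power:
  assumes Q: "kernel_repr D N Q \<Phi>"
  shows "kernel_repr (D + e) N (\<lambda>i r u. r ^ e * Q i r u) (\<lambda>g p r. r ^ e * \<Phi> g p r)"
proof (rule kernel_reprI)
  show "odd_hom_poly (D + e + i) (\<lambda>r u. r ^ e * Q i r u)" for i
    using odd_hom_poly_mult_power[OF kernel_repr_hom[OF Q], of i e] by (simp add: ac_simps)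
  show "r ^ e * Q i r u = 0" if "N < i \<or> odd (N + i)" for i r u
    using kernel_repr_vanish[OF Q that] by simp
next
  fix g and p r :: real assume gr: "smooth2 g" "0 \<le> r"
  show "r ^ e * \<Phi> g p r = integral {0..r} (\<lambda>u. \<Sum>i\<le>N. r ^ e * Q i r u * Mf ((pdx ^^ i) g) p u)"
    unfolding kernel_repr_eq[OF Q gr] integral_mult[OF integrable_kernel_sum[OF kernel_repr_hom[OF Q] gr(1)]]
    by (simp add: sum_distrib_left mult.assoc)
qed

lemma kernel_repr_pdx:
  assumes Q: "kernel_repr (Suc D) N Q \<Phi>"
  shows "kernel_repr D (Suc N) (\<lambda>i. case i of 0 \<Rightarrow> (\<lambda>r u. 0) | Suc j \<Rightarrow> Q j) (\<lambda>g. \<Phi> (pdx g))"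
proof (rule kernel_reprI)
  show "odd_hom_poly (D + i) (case i of 0 \<Rightarrow> (\<lambda>r u. 0) | Suc j \<Rightarrow> Q j)" for i
    using kernel_repr_hom[OF Q] by (cases i) (simp_all add: odd_hom_poly_zero)
  show "(case i of 0 \<Rightarrow> (\<lambda>r u. 0) | Suc j \<Rightarrow> Q j) r u = 0" if "Suc N < i \<or> odd (Suc N + i)" for i r u
  proof (cases i)
    case (Suc j)
    with that have "N < j \<or> odd (N + j)" by simp
    with Suc show ?thesis by (simp add: kernel_repr_vanish[OF Q])
  qed simp
next
  fix g and p r :: real assume gr: "smooth2 g" "0 \<le> r"
  have "(\<Sum>i\<le>Suc N. (case i of 0 \<Rightarrow> (\<lambda>r u. 0) | Suc j \<Rightarrow> Q j) r u * Mf ((pdx ^^ i) g) p u)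
      = (\<Sum>i\<le>N. Q i r u * Mf ((pdx ^^ i) (pdx g)) p u)" for u
    by (subst sum.atMost_Suc_shift) (simp add: funpow_swap1)
  then show "\<Phi> (pdx g) p r = integral {0..r}
      (\<lambda>u. \<Sum>i\<le>Suc N. (case i of 0 \<Rightarrow> (\<lambda>r u. 0) | Suc j \<Rightarrow> Q j) r u * Mf ((pdx ^^ i) g) p u)"
    using kernel_repr_eq[OF Q smooth2_pdx[OF gr(1)] gr(2)] by simp
qed

lemma kernel_repr_Suc_Suc:
  assumes Q: "kernel_repr D N Q \<Phi>"
  shows "kernel_repr D (Suc (Suc N)) Q \<Phi>"
proof (rule kernel_reprI)
  show "Q i r u = 0" if "Suc (Suc N) < i \<or> odd (Suc (Suc N) + i)" for i r u
    using that by (intro kernel_repr_vanish[OF Q]) auto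
  fix g and p r :: real assume gr: "smooth2 g" "0 \<le> r"
  have "Q (Suc N) r u = 0" "Q (Suc (Suc N)) r u = 0" for u
    by (simp_all add: kernel_repr_vanish[OF Q])
  then show "\<Phi> g p r = integral {0..r} (\<lambda>u. \<Sum>i\<le>Suc (Suc N). Q i r u * Mf ((pdx ^^ i) g) p u)"
    using kernel_repr_eq[OF Q gr] by simp
qed (rule kernel_repr_hom[OF assms])

lemma kernel_repr_cmult:
  assumes "kernel_repr D N Q \<Phi>"
  shows "kernel_repr D N (\<lambda>i r u. c * Q i r u) (\<lambda>g p r. c * \<Phi> g p r)"
  using kernel_repr_lincomb[OF assms assms, of c 0] by simp

lemma integrable_power_sin_moment:
  "smooth2 g \<Longrightarrow> (\<lambda>u. u ^ b * sin_moment g n p u) integrable_on {0..r}"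
  by (intro integrable_continuous_interval continuous_intros continuous_on_sin_moment)

lemma integral_add_cmult:
  fixes f h :: "real \<Rightarrow> real"
  assumes "f integrable_on S" "h integrable_on S"
  shows "integral S (\<lambda>x. f x + c * h x) = integral S f + c * integral S h"
proof -
  have "integral S (\<lambda>x. f x + c * h x) = integral S f + integral S (\<lambda>x. c * h x)"
    by (rule integral_add[OF assms(1) integrable_on_mult_right[OF assms(2)]])
  also have "integral S (\<lambda>x. c * h x) = c * integral S h"
    by (rule integral_mult[OF assms(2), symmetric])
  finally show ?thesis .
qed

text \<open>By the radial equation, u^a F_{n+1}(u) is u^(a-n-1) times a primitive; integrate by parts in u.\<close>
lemma integral_weighted_sin_moment_Suc:
  assumes g: "smooth2 g" and r: "0 \<le> r" and "n < a"
  shows "integral {0..r} (\<lambda>u. u ^ a * sin_moment g (Suc n) p u)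
    = r ^ (a - n) / real (a - n) * (integral {0..r} (\<lambda>u. u ^ Suc n * sin_moment (pdx g) n p u)
          + real n * integral {0..r} (\<lambda>u. u ^ n * sin_moment g (n - 1) p u))
      - 1 / real (a - n) * (integral {0..r} (\<lambda>u. u ^ Suc a * sin_moment (pdx g) n p u)
          + real n * integral {0..r} (\<lambda>u. u ^ a * sin_moment g (n - 1) p u))"
proof -
  define e where "e = a - n"
  define H where "H u = u ^ Suc n * sin_moment (pdx g) n p u + real n * (u ^ n * sin_moment g (n - 1) p u)"
    for u
  have e: "1 \<le> e" "a = (e - 1) + Suc n" "a = e + n" using \<open>n < a\<close> by (auto simp: e_def)
  have H: "continuous_on {0..r} H"
    unfolding H_def by (intro continuous_intros continuous_on_sin_moment g smooth2_pdx)
  have "integral {0..r} (\<lambda>u. u ^ a * sin_moment g (Suc n) p u)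
      = integral {0..r} (\<lambda>u. u ^ (e - 1) * integral {0..u} H)"
  proof (rule integral_cong)
    fix u assume "u \<in> {0..r}"
    then have "u ^ Suc n * sin_moment g (Suc n) p u = integral {0..u} H"
      using pow_sin_moment_eq_integral[OF g, of u n p] unfolding H_def by simp
    then show "u ^ a * sin_moment g (Suc n) p u = u ^ (e - 1) * integral {0..u} H"
      by (subst e(2)) (simp add: power_add mult.assoc)
  qed
  also have "\<dots> = r ^ e / real e * integral {0..r} H - 1 / real e * integral {0..r} (\<lambda>v. v ^ e * H v)"
    by (rule integral_power_times_primitive[OF H r e(1)])
  also have "integral {0..r} H = integral {0..r} (\<lambda>u. u ^ Suc n * sin_moment (pdx g) n p u)
      + real n * integral {0..r} (\<lambda>u. u ^ n * sin_moment g (n - 1) p u)"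
    unfolding H_def by (intro integral_add_cmult integrable_power_sin_moment g smooth2_pdx)
  also have "(\<lambda>v. v ^ e * H v)
      = (\<lambda>u. u ^ Suc a * sin_moment (pdx g) n p u + real n * (u ^ a * sin_moment g (n - 1) p u))"
    unfolding H_def by (simp add: e(3) power_add algebra_simps)
  also have "integral {0..r} \<dots> = integral {0..r} (\<lambda>u. u ^ Suc a * sin_moment (pdx g) n p u)
      + real n * integral {0..r} (\<lambda>u. u ^ a * sin_moment g (n - 1) p u)"
    by (intro integral_add_cmult integrable_power_sin_moment g smooth2_pdx)
  finally show ?thesis by (simp add: e_def)
qed

lemma kernel_repr_weighted_sin_moment_0:
  assumes "odd a"
  shows "kernel_repr a 0 (\<lambda>i r u. if i = 0 then 2 * pi * u ^ a else 0)
    (\<lambda>g p r. integral {0..r} (\<lambda>u. u ^ a * sin_moment g 0 p u))"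
proof (rule kernel_reprI)
  show "odd_hom_poly (a + i) (\<lambda>r u. if i = 0 then 2 * pi * u ^ a else 0)" for i
    using odd_hom_poly_lincomb[OF odd_hom_poly_power[OF assms] odd_hom_poly_zero, of "2 * pi" 0]
    by (cases "i = 0") (simp_all add: odd_hom_poly_zero)
  show "(if i = 0 then 2 * pi * u ^ a else 0) = 0" if "0 < i \<or> odd (0 + i)" for i :: nat and u :: real
    using that by auto
qed (simp add: Mf_eq_sin_moment)

lemma kernel_repr_lower_sin_moment:
  assumes IH: "\<And>k b. k < n \<Longrightarrow> k \<le> b \<Longrightarrow> odd (k + b) \<Longrightarrow>
      \<exists>Q. kernel_repr b k Q (\<lambda>g p r. integral {0..r} (\<lambda>u. u ^ b * sin_moment g k p u))"
    and "n \<le> b" "odd (Suc n + b)"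
  shows "\<exists>Q. kernel_repr b (Suc n) Q (\<lambda>g p r. real n * integral {0..r} (\<lambda>u. u ^ b * sin_moment g (n - 1) p u))"
proof (cases n)
  case 0
  show ?thesis
    by (rule exI, rule kernel_repr_cong[OF kernel_repr_zero]) (simp add: 0)
next
  case (Suc k)
  then obtain Q where "kernel_repr b k Q (\<lambda>g p r. integral {0..r} (\<lambda>u. u ^ b * sin_moment g k p u))"
    using IH[of k b] assms(2,3) by auto
  from kernel_repr_cmult[OF kernel_repr_Suc_Suc[OF this], of "real n"] Suc show ?thesis by auto
qed

lemma kernel_repr_weighted_sin_moment:
  "m \<le> a \<Longrightarrow> odd (m + a) \<Longrightarrow>
    \<exists>Q. kernel_repr a m Q (\<lambda>g p r. integral {0..r} (\<lambda>u. u ^ a * sin_moment g m p u))"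
proof (induction m arbitrary: a rule: less_induct)
  case (less m)
  show ?case
  proof (cases m)
    case 0
    with less.prems kernel_repr_weighted_sin_moment_0 show ?thesis by auto
  next
    case (Suc n)
    note lower = kernel_repr_lower_sin_moment[OF less.IH[unfolded Suc]]
    obtain Q1 where Q1: "kernel_repr (Suc n) n Q1
        (\<lambda>g p r. integral {0..r} (\<lambda>u. u ^ Suc n * sin_moment g n p u))"
      using less.IH[of n "Suc n"] Suc by auto
    obtain Q2 where Q2: "kernel_repr n (Suc n) Q2
        (\<lambda>g p r. real n * integral {0..r} (\<lambda>u. u ^ n * sin_moment g (n - 1) p u))"
      using lower[of n n] by auto
    obtain Q3 where Q3: "kernel_repr (Suc a) n Q3
        (\<lambda>g p r. integral {0..r} (\<lambda>u. u ^ Suc a * sin_moment g n p u))"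
      using less.IH[of n "Suc a"] less.prems Suc by auto
    obtain Q4 where Q4: "kernel_repr a (Suc n) Q4
        (\<lambda>g p r. real n * integral {0..r} (\<lambda>u. u ^ a * sin_moment g (n - 1) p u))"
      using lower[of n a] less.prems Suc by auto
    define e where "e = a - n"
    have "n < a" "n + e = a" using less.prems Suc by (simp_all add: e_def)
    note left = kernel_repr_mult_power[OF kernel_repr_lincomb[OF kernel_repr_pdx[OF Q1] Q2, of 1 1], of e,
        unfolded \<open>n + e = a\<close>]
    note right = kernel_repr_lincomb[OF kernel_repr_pdx[OF Q3] Q4, of 1 1]
    note combined = kernel_repr_lincomb[OF left right, of "1 / real e" "- 1 / real e"]
    show ?thesis unfolding Suc
      by (rule exI, rule kernel_repr_cong[OF combined])
        (simp add: integral_weighted_sin_moment_Suc[OF _ _ \<open>n < a\<close>] e_def diff_divide_distrib)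
  qed
qed

lemma kernel_repr_pow_sin_moment:
  "\<exists>Q. kernel_repr n (Suc n) Q (\<lambda>g p r. r ^ Suc n * sin_moment g (Suc n) p r)"
proof -
  obtain Q1 where Q1: "kernel_repr (Suc n) n Q1
      (\<lambda>g p r. integral {0..r} (\<lambda>u. u ^ Suc n * sin_moment g n p u))"
    using kernel_repr_weighted_sin_moment[of n "Suc n"] by auto
  obtain Q2 where Q2: "kernel_repr n (Suc n) Q2
      (\<lambda>g p r. real n * integral {0..r} (\<lambda>u. u ^ n * sin_moment g (n - 1) p u))"
    using kernel_repr_lower_sin_moment[OF kernel_repr_weighted_sin_moment, of n n] by auto
  have eq: "r ^ Suc n * sin_moment g (Suc n) p r
      = integral {0..r} (\<lambda>u. u ^ Suc n * sin_moment (pdx g) n p u)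
        + real n * integral {0..r} (\<lambda>u. u ^ n * sin_moment g (n - 1) p u)"
    if "smooth2 g" "0 \<le> r" for g p r
    unfolding pow_sin_moment_eq_integral[OF that]
    by (intro integral_add_cmult integrable_power_sin_moment that(1) smooth2_pdx)
  show ?thesis
    by (rule exI, rule kernel_repr_cong[OF kernel_repr_lincomb[OF kernel_repr_pdx[OF Q1] Q2, of 1 1]])
      (simp only: eq mult_1)
qed

lemma kernel_repr_scaled:
  assumes "kernel_repr D N Q \<Phi>"
  shows "\<exists>d. (\<forall>i j. D + i < Suc (2 * j) \<longrightarrow> d i j = 0) \<and>
    (\<forall>i r u. r \<noteq> 0 \<longrightarrow> Q i r u = r ^ (D + i) * (\<Sum>j<D + i. d i j * (u / r) ^ Suc (2 * j)))"
proof -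
  have "\<forall>i. \<exists>d. (\<forall>j. D + i < Suc (2 * j) \<longrightarrow> d j = 0) \<and>
      (\<forall>r u. Q i r u = (\<Sum>j<D + i. d j * r ^ (D + i - Suc (2 * j)) * u ^ Suc (2 * j)))"
    using kernel_repr_hom[OF assms] unfolding odd_hom_poly_def by blast
  then obtain d where d: "\<And>i j. D + i < Suc (2 * j) \<Longrightarrow> d i j = 0"
      "\<And>i r u. Q i r u = (\<Sum>j<D + i. d i j * r ^ (D + i - Suc (2 * j)) * u ^ Suc (2 * j))"
    unfolding choice_iff by blast
  have "Q i r u = r ^ (D + i) * (\<Sum>j<D + i. d i j * (u / r) ^ Suc (2 * j))" if "r \<noteq> 0" for i r u
    unfolding d(2) using odd_hom_poly_scaled[of "D + i" "d i" r u] d(1) that by simp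
  with d(1) show ?thesis by blast
qed

definition moment_coeffs :: "nat \<Rightarrow> (nat \<Rightarrow> nat \<Rightarrow> real) \<Rightarrow> bool" where
  "moment_coeffs n c \<longleftrightarrow> (\<forall>i j. n < i \<or> odd (n + i) \<or> (n + i) div 2 \<le> j \<longrightarrow> c i j = 0) \<and>
     (\<forall>g p r. smooth2 g \<longrightarrow> 0 < r \<longrightarrow> sin_moment g n p r = integral {0..r} (\<lambda>u. \<Sum>i\<le>n.
        r powr (real i - 1) * (\<Sum>j<n + i. c i j * (u / r) ^ (2 * j + 1)) * Mf ((pdx ^^ i) g) p u))"

lemma moment_coeffs_exist:
  assumes "1 \<le> n"
  shows "\<exists>c. moment_coeffs n c"
proof -
  obtain m where n: "n = Suc m" using assms by (cases n) auto
  obtain Q where Q: "kernel_repr m n Q (\<lambda>g p r. r ^ n * sin_moment g n p r)"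
    using kernel_repr_pow_sin_moment[of m] n by auto
  obtain d where d: "\<And>i j. m + i < Suc (2 * j) \<Longrightarrow> d i j = 0"
      "\<And>i r u. r \<noteq> 0 \<Longrightarrow> Q i r u = r ^ (m + i) * (\<Sum>j<m + i. d i j * (u / r) ^ Suc (2 * j))"
    using kernel_repr_scaled[OF Q] by blast
  define c where "c i j = (if i \<le> n \<and> even (n + i) then d i j else 0)" for i j
  have scaled: "r powr (- real n) * Q i r u = r powr (real i - 1) * (\<Sum>j<n + i. c i j * (u / r) ^ (2 * j + 1))"
    if r: "0 < r" and i: "i \<le> n" for i r u
  proof (cases "odd (n + i)")
    case True
    then show ?thesis using kernel_repr_vanish[OF Q] by (simp add: c_def)
  next
    case False
    have "r powr (- real n) * Q i r u = r powr (- real n) * r ^ (m + i) * (\<Sum>j<m + i. d i j * (u / r) ^ Suc (2 * j))"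
      using d(2) r by simp
    also have "r powr (- real n) * r ^ (m + i) = r powr (real i - 1)"
      using r by (simp add: n powr_realpow[symmetric] powr_add[symmetric])
    also have "(\<Sum>j<m + i. d i j * (u / r) ^ Suc (2 * j)) = (\<Sum>j<n + i. c i j * (u / r) ^ (2 * j + 1))"
      using d(1)[of i "m + i"] False i by (simp add: n c_def)
    finally show ?thesis .
  qed
  have "moment_coeffs n c"
    unfolding moment_coeffs_def
  proof (intro conjI allI impI)
    fix i j assume ij: "n < i \<or> odd (n + i) \<or> (n + i) div 2 \<le> j"
    show "c i j = 0"
    proof (cases "i \<le> n \<and> even (n + i)")
      case True
      with ij have "m + i < Suc (2 * j)" unfolding n by presburger
      then show ?thesis by (simp add: c_def d(1))
    next
      case False
      then show ?thesis unfolding c_def by (rule if_not_P)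
    qed
  next
    fix g and p r :: real assume g: "smooth2 g" and r: "0 < r"
    have "sin_moment g n p r = r powr (- real n) * (r ^ n * sin_moment g n p r)"
      using r by (simp add: powr_minus powr_realpow)
    also have "\<dots> = integral {0..r} (\<lambda>u. \<Sum>i\<le>n. r powr (- real n) * Q i r u * Mf ((pdx ^^ i) g) p u)"
      using kernel_repr_eq[OF Q g, of r p] r
      by (simp add: integral_mult[OF integrable_kernel_sum[OF kernel_repr_hom[OF Q] g]]
          sum_distrib_left mult.assoc)
    also have "\<dots> = integral {0..r} (\<lambda>u. \<Sum>i\<le>n.
        r powr (real i - 1) * (\<Sum>j<n + i. c i j * (u / r) ^ (2 * j + 1)) * Mf ((pdx ^^ i) g) p u)"
      using scaled r by simp
    finally show "sin_moment g n p r = integral {0..r} (\<lambda>u. \<Sum>i\<le>n.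
        r powr (real i - 1) * (\<Sum>j<n + i. c i j * (u / r) ^ (2 * j + 1)) * Mf ((pdx ^^ i) g) p u)" .
  qed
  then show ?thesis by blast
qed

section \<open>From sine moments to Fourier coefficients\<close>

lemma deriv_Mf:
  assumes "smooth2 g"
  shows "deriv (\<lambda>q. Mf g q u) = (\<lambda>q. Mf (pdx g) q u)"
proof
  fix q
  have "((\<lambda>q. sin_moment g 0 q u / (2 * pi)) has_real_derivative sin_moment (pdx g) 0 q u / (2 * pi)) (at q)"
    by (auto intro!: derivative_eq_intros sin_moment_has_real_derivative_p[OF assms])
  then show "deriv (\<lambda>q. Mf g q u) q = Mf (pdx g) q u"
    unfolding Mf_eq_sin_moment by (rule DERIV_imp_deriv)
qed

lemma higher_deriv_Mf:
  assumes "smooth2 g"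
  shows "(deriv ^^ i) (\<lambda>q. Mf g q u) = (\<lambda>q. Mf ((pdx ^^ i) g) q u)"
  by (induction i) (simp_all add: deriv_Mf smooth2_funpow_pdx assms)

text \<open>
  Coefficients of the polynomials P_0 = 1, P_1 = \<alpha> + \<beta> x, P_(k+2) = 2 (1 - 2 x) P_(k+1) - P_k;
  at x = (sin \<phi>)^2 they give cos (2 k \<phi>) and sin ((2 k + 1) \<phi>) / sin \<phi>.\<close>
fun cheb_coeff :: "real \<Rightarrow> real \<Rightarrow> nat \<Rightarrow> nat \<Rightarrow> real" where
  "cheb_coeff \<alpha> \<beta> 0 m = (if m = 0 then 1 else 0)"
| "cheb_coeff \<alpha> \<beta> (Suc 0) m = (if m = 0 then \<alpha> else if m = 1 then \<beta> else 0)"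
| "cheb_coeff \<alpha> \<beta> (Suc (Suc k)) m = 2 * cheb_coeff \<alpha> \<beta> (Suc k) m
     - 4 * (if m = 0 then 0 else cheb_coeff \<alpha> \<beta> (Suc k) (m - 1)) - cheb_coeff \<alpha> \<beta> k m"

definition cheb_poly :: "real \<Rightarrow> real \<Rightarrow> nat \<Rightarrow> real \<Rightarrow> real" where
  "cheb_poly \<alpha> \<beta> k x = (\<Sum>m\<le>k. cheb_coeff \<alpha> \<beta> k m * x ^ m)"

lemma cheb_coeff_eq_0: "k < m \<Longrightarrow> cheb_coeff \<alpha> \<beta> k m = 0"
  by (induction \<alpha> \<beta> k m rule: cheb_coeff.induct) auto

lemma cheb_coeff_1_0: "cheb_coeff 1 \<beta> k 0 = 1"
proof -
  have "cheb_coeff 1 \<beta> k 0 = 1 \<and> cheb_coeff 1 \<beta> (Suc k) 0 = 1" by (induction k) auto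
  then show ?thesis ..
qed

lemma cheb_poly_Suc_Suc:
  "cheb_poly \<alpha> \<beta> (Suc (Suc k)) x = 2 * (1 - 2 * x) * cheb_poly \<alpha> \<beta> (Suc k) x - cheb_poly \<alpha> \<beta> k x"
proof -
  have prev: "(\<Sum>m\<le>Suc (Suc k). cheb_coeff \<alpha> \<beta> (Suc k) m * x ^ m) = cheb_poly \<alpha> \<beta> (Suc k) x"
    "(\<Sum>m\<le>Suc (Suc k). cheb_coeff \<alpha> \<beta> k m * x ^ m) = cheb_poly \<alpha> \<beta> k x"
    unfolding cheb_poly_def by (simp_all add: cheb_coeff_eq_0)
  have shift: "(\<Sum>m\<le>Suc (Suc k). (if m = 0 then 0 else cheb_coeff \<alpha> \<beta> (Suc k) (m - 1)) * x ^ m)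
      = x * cheb_poly \<alpha> \<beta> (Suc k) x"
    unfolding cheb_poly_def by (simp only: sum.atMost_Suc_shift) (simp add: sum_distrib_left algebra_simps)
  have "cheb_poly \<alpha> \<beta> (Suc (Suc k)) x = (\<Sum>m\<le>Suc (Suc k). 2 * (cheb_coeff \<alpha> \<beta> (Suc k) m * x ^ m)
      - 4 * ((if m = 0 then 0 else cheb_coeff \<alpha> \<beta> (Suc k) (m - 1)) * x ^ m) - cheb_coeff \<alpha> \<beta> k m * x ^ m)"
    unfolding cheb_poly_def by (rule sum.cong) (auto simp: algebra_simps)
  also have "\<dots> = 2 * cheb_poly \<alpha> \<beta> (Suc k) x - 4 * (x * cheb_poly \<alpha> \<beta> (Suc k) x) - cheb_poly \<alpha> \<beta> k x"
    unfolding sum_subtractf sum_distrib_left[symmetric] prev shift ..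
  finally show ?thesis by (simp add: algebra_simps)
qed

lemma cos_add_double_eq: "cos (x + 2 * y) = 2 * (1 - 2 * (sin y)\<^sup>2) * cos x - cos (x - 2 * y)"
  for x y :: real
proof -
  have "cos (x + 2 * y) + cos (x - 2 * y) = 2 * cos x * cos (2 * y)"
    by (simp add: cos_add cos_diff)
  then have "cos (x + 2 * y) = 2 * cos x * cos (2 * y) - cos (x - 2 * y)" by linarith
  then show ?thesis by (simp add: cos_double_sin)
qed

lemma sin_add_double_eq: "sin (x + 2 * y) = 2 * (1 - 2 * (sin y)\<^sup>2) * sin x - sin (x - 2 * y)"
  for x y :: real
proof -
  have "sin (x + 2 * y) + sin (x - 2 * y) = 2 * sin x * cos (2 * y)"
    by (simp add: sin_add sin_diff)
  then have "sin (x + 2 * y) = 2 * sin x * cos (2 * y) - sin (x - 2 * y)" by linarith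
  then show ?thesis by (simp add: cos_double_sin)
qed

lemma cos_even_mult_eq_cheb_poly: "cos (real (2 * k) * \<phi>) = cheb_poly 1 (-2) k ((sin \<phi>)\<^sup>2)"
proof -
  have "cos (real (2 * k) * \<phi>) = cheb_poly 1 (-2) k ((sin \<phi>)\<^sup>2) \<and>
      cos (real (2 * Suc k) * \<phi>) = cheb_poly 1 (-2) (Suc k) ((sin \<phi>)\<^sup>2)"
  proof (induction k)
    case 0
    show ?case by (simp add: cheb_poly_def cos_double_sin)
  next
    case (Suc k)
    have "cos (real (2 * Suc (Suc k)) * \<phi>) = cos (real (2 * Suc k) * \<phi> + 2 * \<phi>)"
      by (simp add: algebra_simps)
    also have "\<dots> = cheb_poly 1 (-2) (Suc (Suc k)) ((sin \<phi>)\<^sup>2)"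
      using cos_add_double_eq[of "real (2 * Suc k) * \<phi>" \<phi>] Suc.IH by (simp add: cheb_poly_Suc_Suc algebra_simps)
    finally show ?case using Suc.IH by simp
  qed
  then show ?thesis by simp
qed

lemma sin_odd_mult_eq_cheb_poly: "sin (real (2 * k + 1) * \<phi>) = sin \<phi> * cheb_poly 3 (-4) k ((sin \<phi>)\<^sup>2)"
proof -
  have "sin (real (2 * k + 1) * \<phi>) = sin \<phi> * cheb_poly 3 (-4) k ((sin \<phi>)\<^sup>2) \<and>
      sin (real (2 * Suc k + 1) * \<phi>) = sin \<phi> * cheb_poly 3 (-4) (Suc k) ((sin \<phi>)\<^sup>2)"
  proof (induction k)
    case 0
    have "sin (3 * \<phi>) = 3 * sin \<phi> - 4 * sin \<phi> ^ 3"
      using sin_add_double_eq[of \<phi> \<phi>] by (simp add: algebra_simps power2_eq_square eval_nat_numeral)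
    then show ?case by (simp add: cheb_poly_def power2_eq_square algebra_simps eval_nat_numeral)
  next
    case (Suc k)
    have "sin (real (2 * Suc (Suc k) + 1) * \<phi>) = sin (real (2 * Suc k + 1) * \<phi> + 2 * \<phi>)"
      by (simp add: algebra_simps)
    also have "\<dots> = sin \<phi> * cheb_poly 3 (-4) (Suc (Suc k)) ((sin \<phi>)\<^sup>2)"
      using sin_add_double_eq[of "real (2 * Suc k + 1) * \<phi>" \<phi>] Suc.IH
      by (simp add: cheb_poly_Suc_Suc algebra_simps)
    finally show ?case using Suc.IH by simp
  qed
  then show ?thesis by simp
qed

lemma integrable_circ_sin_power:
  "smooth2 g \<Longrightarrow> (\<lambda>\<phi>. circ g p r \<phi> * sin \<phi> ^ n) integrable_on {-pi..pi}"
  unfolding circ_def by (intro integrable_circle smooth2_continuous_on continuous_intros)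

lemma a_coef_even_eq_sin_moments:
  assumes g: "smooth2 g"
  shows "a_coef g (2 * k) p r
    = 2 * Mf g p r + 1 / pi * (\<Sum>m=1..k. cheb_coeff 1 (-2) k m * sin_moment g (2 * m) p r)"
proof -
  have "integral {-pi..pi} (\<lambda>\<phi>. circ g p r \<phi> * cos (real (2 * k) * \<phi>))
      = integral {-pi..pi} (\<lambda>\<phi>. \<Sum>m\<le>k. cheb_coeff 1 (-2) k m * (circ g p r \<phi> * sin \<phi> ^ (2 * m)))"
    unfolding cos_even_mult_eq_cheb_poly cheb_poly_def
    by (rule integral_cong) (simp only: sum_distrib_left power_mult, simp add: algebra_simps)
  also have "\<dots> = (\<Sum>m\<le>k. integral {-pi..pi} (\<lambda>\<phi>. cheb_coeff 1 (-2) k m * (circ g p r \<phi> * sin \<phi> ^ (2 * m))))"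
    by (rule integral_sum) (simp, rule integrable_on_mult_right[OF integrable_circ_sin_power[OF g]])
  also have "\<dots> = (\<Sum>m\<le>k. cheb_coeff 1 (-2) k m * sin_moment g (2 * m) p r)"
    unfolding sin_moment_def circ_def by simp
  also have "\<dots> = 2 * pi * Mf g p r + (\<Sum>m=1..k. cheb_coeff 1 (-2) k m * sin_moment g (2 * m) p r)"
    by (simp add: atMost_atLeast0 sum.atLeast_Suc_atMost cheb_coeff_1_0 Mf_eq_sin_moment)
  finally show ?thesis unfolding a_coef_def by (simp add: algebra_simps)
qed

lemma b_coef_odd_eq_sin_moments:
  assumes g: "smooth2 g"
  shows "b_coef g (2 * k + 1) p r = 1 / pi * (\<Sum>m\<le>k. cheb_coeff 3 (-4) k m * sin_moment g (2 * m + 1) p r)"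
proof -
  have "integral {-pi..pi} (\<lambda>\<phi>. circ g p r \<phi> * sin (real (2 * k + 1) * \<phi>))
      = integral {-pi..pi} (\<lambda>\<phi>. \<Sum>m\<le>k. cheb_coeff 3 (-4) k m * (circ g p r \<phi> * sin \<phi> ^ (2 * m + 1)))"
    unfolding sin_odd_mult_eq_cheb_poly cheb_poly_def
    by (rule integral_cong)
      (simp only: sum_distrib_left power_add power_mult power_one_right, simp add: algebra_simps)
  also have "\<dots> = (\<Sum>m\<le>k. integral {-pi..pi} (\<lambda>\<phi>. cheb_coeff 3 (-4) k m * (circ g p r \<phi> * sin \<phi> ^ (2 * m + 1))))"
    by (rule integral_sum) (simp, rule integrable_on_mult_right[OF integrable_circ_sin_power[OF g]])
  also have "\<dots> = (\<Sum>m\<le>k. cheb_coeff 3 (-4) k m * sin_moment g (2 * m + 1) p r)"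
    unfolding sin_moment_def circ_def by simp
  finally show ?thesis unfolding b_coef_def by simp
qed

lemma sum_atMost_even_indices:
  fixes k :: nat
  shows "(\<And>i. odd i \<Longrightarrow> G i = 0) \<Longrightarrow> (\<Sum>i\<le>2 * k. G i) = (\<Sum>i\<le>k. G (2 * i) :: 'a::comm_monoid_add)"
  by (induction k) auto

lemma sum_atMost_odd_indices:
  fixes k :: nat
  shows "(\<And>i. even i \<Longrightarrow> G i = 0) \<Longrightarrow> (\<Sum>i\<le>2 * k + 1. G i) = (\<Sum>i\<le>k. G (2 * i + 1) :: 'a::comm_monoid_add)"
  by (induction k) auto

lemma sum_mult_between:
  fixes a b :: "'b::comm_ring_1"
  shows "(\<Sum>m\<in>A. w m * (a * f m * b)) = a * (\<Sum>m\<in>A. w m * f m) * b"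
  by (simp add: sum_distrib_left sum_distrib_right ac_simps)

lemma sum_odd_power_sums_collect:
  fixes c :: "'a \<Rightarrow> nat \<Rightarrow> real"
  assumes "finite M" "\<And>m j. m \<in> M \<Longrightarrow> min (N m) L \<le> j \<Longrightarrow> c m j = 0"
  shows "(\<Sum>m\<in>M. w m * (\<Sum>j<N m. c m j * t ^ (2 * j + 1)))
    = (\<Sum>j=1..L. (\<Sum>m\<in>M. w m * c m (j - 1)) * t ^ (2 * j - 1))"
proof -
  have "(\<Sum>m\<in>M. w m * (\<Sum>j<N m. c m j * t ^ (2 * j + 1)))
      = (\<Sum>m\<in>M. \<Sum>j<L. w m * c m j * t ^ (2 * j + 1))"
  proof (rule sum.cong[OF refl])
    fix m assume "m \<in> M"
    then have "(\<Sum>j<N m. c m j * t ^ (2 * j + 1)) = (\<Sum>j<L. c m j * t ^ (2 * j + 1))"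
      by (intro sum_lessThan_eq_zero_tail[where L = "min (N m) L"]) (auto simp: assms(2))
    then show "w m * (\<Sum>j<N m. c m j * t ^ (2 * j + 1)) = (\<Sum>j<L. w m * c m j * t ^ (2 * j + 1))"
      by (simp add: sum_distrib_left mult.assoc)
  qed
  also have "\<dots> = (\<Sum>j<L. (\<Sum>m\<in>M. w m * c m j) * t ^ (2 * j + 1))"
    by (subst sum.swap) (simp add: sum_distrib_right)
  also have "\<dots> = (\<Sum>j=1..L. (\<Sum>m\<in>M. w m * c m (j - 1)) * t ^ (2 * j - 1))"
    by (simp add: sum.atLeast1_atMost_eq)
  finally show ?thesis .
qed

lemma sum_even_moment_kernels:
  fixes c :: "nat \<Rightarrow> nat \<Rightarrow> nat \<Rightarrow> real"
  assumes c: "\<And>n i j. 1 \<le> n \<Longrightarrow> n < i \<or> odd (n + i) \<or> (n + i) div 2 \<le> j \<Longrightarrow> c n i j = 0"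
  shows "(\<Sum>m=1..k. w m * (\<Sum>i\<le>2 * m. R i * (\<Sum>j<2 * m + i. c (2 * m) i j * t ^ (2 * j + 1)) * X i))
    = (\<Sum>i\<le>k. R (2 * i) * (\<Sum>j=1..k + i. (\<Sum>m=1..k. w m * c (2 * m) (2 * i) (j - 1)) * t ^ (2 * j - 1))
        * X (2 * i))"
proof -
  define S where "S m i = (\<Sum>j<2 * m + i. c (2 * m) i j * t ^ (2 * j + 1))" for m i
  have S0: "S m i = 0" if "m \<in> {1..k}" "2 * m < i \<or> odd i" for m i
    unfolding S_def using that by (auto intro!: sum.neutral c)
  have "(\<Sum>m=1..k. w m * (\<Sum>i\<le>2 * m. R i * S m i * X i))
      = (\<Sum>m=1..k. w m * (\<Sum>i\<le>2 * k. R i * S m i * X i))"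
    by (intro sum.cong refl arg_cong[where f = "(*) _"] sum.mono_neutral_left) (auto simp: S0)
  also have "\<dots> = (\<Sum>i\<le>2 * k. \<Sum>m=1..k. w m * (R i * S m i * X i))"
    unfolding sum_distrib_left by (rule sum.swap)
  also have "\<dots> = (\<Sum>i\<le>k. \<Sum>m=1..k. w m * (R (2 * i) * S m (2 * i) * X (2 * i)))"
    by (rule sum_atMost_even_indices) (simp add: S0)
  also have "\<dots> = (\<Sum>i\<le>k. R (2 * i) * (\<Sum>j=1..k + i. (\<Sum>m=1..k. w m * c (2 * m) (2 * i) (j - 1))
      * t ^ (2 * j - 1)) * X (2 * i))"
  proof (rule sum.cong[OF refl])
    fix i
    have collect: "(\<Sum>m=1..k. w m * S m (2 * i))
        = (\<Sum>j=1..k + i. (\<Sum>m=1..k. w m * c (2 * m) (2 * i) (j - 1)) * t ^ (2 * j - 1))"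
      unfolding S_def
    proof (rule sum_odd_power_sums_collect)
      fix m j assume m: "m \<in> {1..k}" and j: "min (2 * m + 2 * i) (k + i) \<le> j"
      then have "2 * m < 2 * i \<or> (2 * m + 2 * i) div 2 \<le> j" by auto
      with m show "c (2 * m) (2 * i) j = 0" by (intro c) auto
    qed simp
    show "(\<Sum>m=1..k. w m * (R (2 * i) * S m (2 * i) * X (2 * i)))
        = R (2 * i) * (\<Sum>j=1..k + i. (\<Sum>m=1..k. w m * c (2 * m) (2 * i) (j - 1)) * t ^ (2 * j - 1))
          * X (2 * i)"
      unfolding sum_mult_between collect by (rule refl)
  qed
  finally show ?thesis unfolding S_def .
qed

lemma sum_odd_moment_kernels:
  fixes c :: "nat \<Rightarrow> nat \<Rightarrow> nat \<Rightarrow> real"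
  assumes c: "\<And>n i j. 1 \<le> n \<Longrightarrow> n < i \<or> odd (n + i) \<or> (n + i) div 2 \<le> j \<Longrightarrow> c n i j = 0"
  shows "(\<Sum>m\<le>k. w m * (\<Sum>i\<le>2 * m + 1. R i * (\<Sum>j<2 * m + 1 + i. c (2 * m + 1) i j * t ^ (2 * j + 1)) * X i))
    = (\<Sum>i=1..Suc k. R (2 * i - 1)
        * (\<Sum>j=1..k + i. (\<Sum>m\<le>k. w m * c (2 * m + 1) (2 * i - 1) (j - 1)) * t ^ (2 * j - 1)) * X (2 * i - 1))"
proof -
  define S where "S m i = (\<Sum>j<2 * m + 1 + i. c (2 * m + 1) i j * t ^ (2 * j + 1))" for m i
  have S0: "S m i = 0" if "2 * m + 1 < i \<or> even i" for m i
  proof -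
    have "c (2 * m + 1) i j = 0" for j using that by (intro c) auto
    then show ?thesis unfolding S_def by simp
  qed
  have "(\<Sum>m\<le>k. w m * (\<Sum>i\<le>2 * m + 1. R i * S m i * X i))
      = (\<Sum>m\<le>k. w m * (\<Sum>i\<le>2 * k + 1. R i * S m i * X i))"
    by (intro sum.cong refl arg_cong[where f = "(*) _"] sum.mono_neutral_left) (auto simp: S0)
  also have "\<dots> = (\<Sum>i\<le>2 * k + 1. \<Sum>m\<le>k. w m * (R i * S m i * X i))"
    unfolding sum_distrib_left by (rule sum.swap)
  also have "\<dots> = (\<Sum>i\<le>k. \<Sum>m\<le>k. w m * (R (2 * i + 1) * S m (2 * i + 1) * X (2 * i + 1)))"
    by (rule sum_atMost_odd_indices) (simp add: S0)
  also have "\<dots> = (\<Sum>i=1..Suc k. \<Sum>m\<le>k. w m * (R (2 * i - 1) * S m (2 * i - 1) * X (2 * i - 1)))"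
    by (simp only: One_nat_def sum.atLeast1_atMost_eq lessThan_Suc_atMost) simp
  also have "\<dots> = (\<Sum>i=1..Suc k. R (2 * i - 1)
      * (\<Sum>j=1..k + i. (\<Sum>m\<le>k. w m * c (2 * m + 1) (2 * i - 1) (j - 1)) * t ^ (2 * j - 1)) * X (2 * i - 1))"
  proof (rule sum.cong[OF refl])
    fix i assume i: "i \<in> {1..Suc k}"
    have collect: "(\<Sum>m\<le>k. w m * S m (2 * i - 1))
        = (\<Sum>j=1..k + i. (\<Sum>m\<le>k. w m * c (2 * m + 1) (2 * i - 1) (j - 1)) * t ^ (2 * j - 1))"
      unfolding S_def
    proof (rule sum_odd_power_sums_collect)
      fix m j assume m: "m \<in> {..k}" and j: "min (2 * m + 1 + (2 * i - 1)) (k + i) \<le> j"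
      then have "2 * m + 1 < 2 * i - 1 \<or> (2 * m + 1 + (2 * i - 1)) div 2 \<le> j" using i by auto
      then show "c (2 * m + 1) (2 * i - 1) j = 0" by (intro c) auto
    qed simp
    show "(\<Sum>m\<le>k. w m * (R (2 * i - 1) * S m (2 * i - 1) * X (2 * i - 1)))
        = R (2 * i - 1) * (\<Sum>j=1..k + i. (\<Sum>m\<le>k. w m * c (2 * m + 1) (2 * i - 1) (j - 1))
          * t ^ (2 * j - 1)) * X (2 * i - 1)"
      unfolding sum_mult_between collect by (rule refl)
  qed
  finally show ?thesis unfolding S_def .
qed

lemma moment_coeffs_vanish:
  assumes "moment_coeffs n c" "n < i \<or> odd (n + i) \<or> (n + i) div 2 \<le> j"
  shows "c i j = 0"
  using conjunct1[OF assms(1)[unfolded moment_coeffs_def]] assms(2) by blast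

lemma moment_coeffs_eq:
  assumes "moment_coeffs n c" "smooth2 g" "0 < r"
  shows "sin_moment g n p r = integral {0..r} (\<lambda>u. \<Sum>i\<le>n.
    r powr (real i - 1) * (\<Sum>j<n + i. c i j * (u / r) ^ (2 * j + 1)) * Mf ((pdx ^^ i) g) p u)"
  using conjunct2[OF assms(1)[unfolded moment_coeffs_def]] assms(2,3) by blast

lemma sum_sin_moments_eq_integral:
  assumes g: "smooth2 g" and c: "\<And>n. 1 \<le> n \<Longrightarrow> moment_coeffs n (c n)" and r: "0 < r"
    and M: "finite M" "\<And>m. m \<in> M \<Longrightarrow> 1 \<le> n m"
  shows "(\<Sum>m\<in>M. w m * sin_moment g (n m) p r) = integral {0..r} (\<lambda>u. \<Sum>m\<in>M. w m * (\<Sum>i\<le>n m.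
      r powr (real i - 1) * (\<Sum>j<n m + i. c (n m) i j * (u / r) ^ (2 * j + 1)) * Mf ((pdx ^^ i) g) p u))"
proof -
  define I where "I m u = (\<Sum>i\<le>n m.
      r powr (real i - 1) * (\<Sum>j<n m + i. c (n m) i j * (u / r) ^ (2 * j + 1)) * Mf ((pdx ^^ i) g) p u)"
    for m u
  have I: "I m integrable_on {0..r}" for m
    unfolding I_def using r
    by (intro integrable_continuous_interval continuous_intros continuous_on_Mf smooth2_funpow_pdx g) simp
  have "(\<Sum>m\<in>M. w m * sin_moment g (n m) p r) = (\<Sum>m\<in>M. integral {0..r} (\<lambda>u. w m * I m u))"
    using moment_coeffs_eq[OF c g r] M(2) by (simp add: I_def integral_mult[OF I[unfolded I_def]])
  also have "\<dots> = integral {0..r} (\<lambda>u. \<Sum>m\<in>M. w m * I m u)"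
    by (rule integral_sum[symmetric]) (use M(1) in \<open>auto intro: integrable_on_mult_right I\<close>)
  finally show ?thesis unfolding I_def .
qed

definition a_kernel :: "(nat \<Rightarrow> nat \<Rightarrow> nat \<Rightarrow> real) \<Rightarrow> nat \<Rightarrow> nat \<Rightarrow> nat \<Rightarrow> real" where
  "a_kernel c k i j = (\<Sum>m=1..k. cheb_coeff 1 (-2) k m / pi * c (2 * m) (2 * i) (j - 1))"

definition b_kernel :: "(nat \<Rightarrow> nat \<Rightarrow> nat \<Rightarrow> real) \<Rightarrow> nat \<Rightarrow> nat \<Rightarrow> nat \<Rightarrow> real" where
  "b_kernel c k i j = (\<Sum>m\<le>k - 1. cheb_coeff 3 (-4) (k - 1) m / pi * c (2 * m + 1) (2 * i - 1) (j - 1))"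

lemma a_coef_eq_kernel_integral:
  assumes f: "smooth2 f" and c: "\<And>n. 1 \<le> n \<Longrightarrow> moment_coeffs n (c n)" and r: "0 < r"
  shows "a_coef f (2 * k) p r = 2 * Mf f p r + integral {0..r} (\<lambda>u. \<Sum>i = 0..k.
      r powr (2 * real i - 1) * (\<Sum>j = 1..k + i. a_kernel c k i j * (u / r) ^ (2 * j - 1))
      * (deriv ^^ (2 * i)) (\<lambda>q. Mf f q u) p)"
proof -
  have "a_coef f (2 * k) p r
      = 2 * Mf f p r + (\<Sum>m=1..k. cheb_coeff 1 (-2) k m / pi * sin_moment f (2 * m) p r)"
    by (simp add: a_coef_even_eq_sin_moments[OF f] sum_distrib_left)
  also have "(\<Sum>m=1..k. cheb_coeff 1 (-2) k m / pi * sin_moment f (2 * m) p r)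
      = integral {0..r} (\<lambda>u. \<Sum>m=1..k. cheb_coeff 1 (-2) k m / pi * (\<Sum>i\<le>2 * m. r powr (real i - 1)
          * (\<Sum>j<2 * m + i. c (2 * m) i j * (u / r) ^ (2 * j + 1)) * Mf ((pdx ^^ i) f) p u))"
    by (rule sum_sin_moments_eq_integral[OF f c r]) auto
  also have "\<dots> = integral {0..r} (\<lambda>u. \<Sum>i\<le>k. r powr (real (2 * i) - 1)
      * (\<Sum>j=1..k + i. a_kernel c k i j * (u / r) ^ (2 * j - 1)) * Mf ((pdx ^^ (2 * i)) f) p u)"
    unfolding a_kernel_def
    by (intro integral_cong sum_even_moment_kernels[of c] moment_coeffs_vanish[OF c])
  finally show ?thesis by (simp add: higher_deriv_Mf[OF f] atLeast0AtMost)
qed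

lemma b_coef_eq_kernel_integral:
  assumes f: "smooth2 f" and c: "\<And>n. 1 \<le> n \<Longrightarrow> moment_coeffs n (c n)" and r: "0 < r" and k: "1 \<le> k"
  shows "b_coef f (2 * k - 1) p r = integral {0..r} (\<lambda>u. \<Sum>i = 1..k.
      r ^ (2 * (i - 1)) * (\<Sum>j = 1..k + i - 1. b_kernel c k i j * (u / r) ^ (2 * j - 1))
      * (deriv ^^ (2 * i - 1)) (\<lambda>q. Mf f q u) p)"
proof -
  obtain l where l: "k = Suc l" using k by (cases k) auto
  have "2 * k - 1 = 2 * l + 1" using l by simp
  then have "b_coef f (2 * k - 1) p r = (\<Sum>m\<le>l. cheb_coeff 3 (-4) l m / pi * sin_moment f (2 * m + 1) p r)"
    by (simp only: b_coef_odd_eq_sin_moments[OF f] sum_distrib_left) simp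
  also have "\<dots> = integral {0..r} (\<lambda>u. \<Sum>m\<le>l. cheb_coeff 3 (-4) l m / pi * (\<Sum>i\<le>2 * m + 1.
      r powr (real i - 1) * (\<Sum>j<2 * m + 1 + i. c (2 * m + 1) i j * (u / r) ^ (2 * j + 1))
      * Mf ((pdx ^^ i) f) p u))"
    by (rule sum_sin_moments_eq_integral[OF f c r]) auto
  also have "\<dots> = integral {0..r} (\<lambda>u. \<Sum>i=1..k. r powr (real (2 * i - 1) - 1)
      * (\<Sum>j=1..k + i - 1. b_kernel c k i j * (u / r) ^ (2 * j - 1)) * Mf ((pdx ^^ (2 * i - 1)) f) p u)"
    unfolding b_kernel_def l diff_Suc_1 add_Suc add_diff_cancel_left'
    by (intro integral_cong sum_odd_moment_kernels[of c] moment_coeffs_vanish[OF c])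
  also have "\<dots> = integral {0..r} (\<lambda>u. \<Sum>i = 1..k.
      r ^ (2 * (i - 1)) * (\<Sum>j = 1..k + i - 1. b_kernel c k i j * (u / r) ^ (2 * j - 1))
      * (deriv ^^ (2 * i - 1)) (\<lambda>q. Mf f q u) p)"
  proof (intro integral_cong sum.cong refl)
    fix i assume "i \<in> {1..k}"
    then have "r powr (real (2 * i - 1) - 1) = r ^ (2 * (i - 1))"
      using r by (simp add: of_nat_diff powr_realpow[symmetric] algebra_simps)
    then show "r powr (real (2 * i - 1) - 1) * (\<Sum>j=1..k + i - 1. b_kernel c k i j * (u / r) ^ (2 * j - 1))
        * Mf ((pdx ^^ (2 * i - 1)) f) p u = r ^ (2 * (i - 1))
        * (\<Sum>j = 1..k + i - 1. b_kernel c k i j * (u / r) ^ (2 * j - 1))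
        * (deriv ^^ (2 * i - 1)) (\<lambda>q. Mf f q u) p" for u
      by (simp add: higher_deriv_Mf[OF f])
  qed
  finally show ?thesis .
qed

theorem lemma1:
  fixes f :: "real \<times> real \<Rightarrow> real" and K :: "(real \<times> real) set"
  assumes "smooth2 f"
    and "compact K" and "K \<subseteq> {z. snd z > 0}" and "\<forall>z. z \<notin> K \<longrightarrow> f z = 0"
  shows "\<exists>(A :: nat \<Rightarrow> nat \<Rightarrow> nat \<Rightarrow> real) (B :: nat \<Rightarrow> nat \<Rightarrow> nat \<Rightarrow> real).
    \<forall>p r k. 0 < r \<and> 1 \<le> k \<longrightarrow>
      a_coef f (2 * k) p r
        = 2 * Mf f p r
          + integral {0..r} (\<lambda>u. \<Sum>i = 0..k.
              r powr (2 * real i - 1)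
              * (\<Sum>j = 1..k + i. A k i j * (u / r) ^ (2 * j - 1))
              * (deriv ^^ (2 * i)) (\<lambda>q. Mf f q u) p)
      \<and> b_coef f (2 * k - 1) p r
        = integral {0..r} (\<lambda>u. \<Sum>i = 1..k.
              r ^ (2 * (i - 1))
              * (\<Sum>j = 1..k + i - 1. B k i j * (u / r) ^ (2 * j - 1))
              * (deriv ^^ (2 * i - 1)) (\<lambda>q. Mf f q u) p)"
proof -
  have "\<forall>n. \<exists>c. 1 \<le> n \<longrightarrow> moment_coeffs n c"
    using moment_coeffs_exist by blast
  then obtain c where c: "\<And>n. 1 \<le> n \<Longrightarrow> moment_coeffs n (c n)"
    unfolding choice_iff by blast
  show ?thesis
    by (intro exI[of _ "a_kernel c"] exI[of _ "b_kernel c"] allI impI conjI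
        a_coef_eq_kernel_integral[OF assms(1) c] b_coef_eq_kernel_integral[OF assms(1) c]) auto
qed

end
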